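(* Let $I\subset\mathbb{R}$ be an interval, let $n\in\mathbb{N}$ be odd, and let $f:I\to\mathbb{R}$ be $n$-convex. Then for every $x_1$ in the interior of $I$ there exists a polynomial $p\in\Pi_n$ such that $p(x_1)=f(x_1)$ and $p(x)\le f(x)$ for all $x\in I$.
   Context: $\Pi_n$ denotes the set of real polynomials of degree at most $n$. Divided differences are defined recursively by $[x_1;f]:=f(x_1)$ and $[x_1,\dots,x_{m+1};f]:=\frac{[x_2,\dots,x_{m+1};f]-[x_1,\dots,x_m;f]}{x_{m+1}-x_1}$ for pairwise distinct points. For $n\in\mathbb{N}$, a function $f:I\to\mathbb{R}$ is called $n$-convex if $[x_1,\dots,x_{n+2};f]\ge 0$ for all pairwise distinct $x_1,\dots,x_{n+2}\in I$. *)

theory Defs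
  imports "HOL-Analysis.Analysis" "HOL-Computational_Algebra.Polynomial"
begin

text \<open>Divided difference [x_1,...,x_m; f] of f at the points of the list xs, following
  the recursion [x_1;f] = f(x_1),
  [x_1,...,x_{m+1};f] = ([x_2,...,x_{m+1};f] - [x_1,...,x_m;f]) / (x_{m+1} - x_1).
  (The value on the empty list is irrelevant and set to 0.)\<close>
function divdiff :: "real list \<Rightarrow> (real \<Rightarrow> real) \<Rightarrow> real" where
  "divdiff [] f = 0"
| "divdiff [x] f = f x"
| "divdiff (x # y # zs) f =
     (divdiff (y # zs) f - divdiff (butlast (x # y # zs)) f) / (last (y # zs) - x)"
  by pat_completeness auto
termination
  by (relation "Wellfounded.measure (\<lambda>(xs, f). length xs)") auto

definition n_convex :: "nat \<Rightarrow> real set \<Rightarrow> (real \<Rightarrow> real) \<Rightarrow> bool" where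
  "n_convex n I f \<longleftrightarrow>
     (\<forall>xs. length xs = n + 2 \<and> distinct xs \<and> set xs \<subseteq> I \<longrightarrow> divdiff xs f \<ge> 0)"

end

theory Submission
  imports Defs
begin

text \<open>Write \<open>f x = f x1 + (x - x1) g x\<close>, where \<open>g\<close> is the slope of \<open>f\<close> at \<open>x1\<close>; then \<open>g\<close> is
  \<open>(n - 1)\<close>-convex on \<open>I - {x1}\<close>. If \<open>q\<close> has degree \<open>n - 1\<close> and \<open>(x - x1)^n (g x - q x) \<ge> 0\<close>,
  then \<open>p = f x1 + (x - x1) q\<close> satisfies \<open>(x - x1)^(n+1) (f - p) \<ge> 0\<close>, i.e. \<open>p \<le> f\<close> as \<open>n + 1\<close>
  is even. Such a \<open>q\<close> exists for every \<open>m\<close>-convex \<open>h\<close> on a punctured neighbourhood of \<open>c\<close>,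
  by induction on \<open>m\<close>: for \<open>m = 0\<close>, \<open>h\<close> is monotone and a constant between its one-sided
  limits works; for \<open>m > 0\<close>, \<open>h\<close> has an \<open>m\<close>-convex extension to \<open>c\<close>, and the induction
  hypothesis applies to the slope of that extension at \<open>c\<close>. The extension value is found
  between the values at \<open>c\<close> of the interpolation polynomials of \<open>h\<close> on node sets \<open>T\<close> with
  \<open>\<Prod>t\<in>T. c - t\<close> positive and those with it negative: moving nodes towards \<open>c\<close> changes these values
  monotonically, and near \<open>c\<close> they differ by \<open>O(\<epsilon>^m)\<close>.\<close>

text \<open>The closed (Lagrange) form of the divided difference depends only on the set of nodes,
  which frees all arguments below from orderings of the nodes.\<close>
definition divdiff_set :: "real set \<Rightarrow> (real \<Rightarrow> real) \<Rightarrow> real" where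
  "divdiff_set S f = (\<Sum>x\<in>S. f x / (\<Prod>y\<in>S - {x}. x - y))"

lemma divdiff_set_singleton [simp]: "divdiff_set {x} f = f x"
  by (simp add: divdiff_set_def)

lemma divdiff_set_cong: "(\<And>x. x \<in> S \<Longrightarrow> f x = g x) \<Longrightarrow> divdiff_set S f = divdiff_set S g"
  unfolding divdiff_set_def by (rule sum.cong) auto

lemma divdiff_set_doubleton:
  assumes "y \<noteq> z" shows "divdiff_set {y, z} f = (f z - f y) / (z - y)"
proof -
  have "divdiff_set {y, z} f = f y / (y - z) + f z / (z - y)"
    using assms by (simp add: divdiff_set_def insert_Diff_if)
  also have "f y / (y - z) = - (f y / (z - y))"
    by (metis minus_diff_eq minus_divide_right)
  finally show ?thesis by (simp add: diff_divide_distrib)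
qed

lemma set_butlast_distinct: "set (butlast xs) = set xs - {last xs}" if "distinct xs"
proof (cases xs rule: rev_cases)
  case (snoc ys y)
  then show ?thesis using that by auto
qed simp

lemma divdiff_set_remove:
  assumes "finite S" "u \<in> S"
  shows "divdiff_set (S - {u}) f = (\<Sum>x\<in>S. (x - u) * f x / (\<Prod>y\<in>S - {x}. x - y))"
proof -
  have "(\<Sum>x\<in>S. (x - u) * f x / (\<Prod>y\<in>S - {x}. x - y))
      = (\<Sum>x\<in>S - {u}. (x - u) * f x / (\<Prod>y\<in>S - {x}. x - y))"
    using assms by (simp add: sum.remove)
  also have "\<dots> = divdiff_set (S - {u}) f"
    unfolding divdiff_set_def
  proof (rule sum.cong [OF refl])
    fix x assume x: "x \<in> S - {u}"
    then have "S - {x} = insert u (S - {u} - {x})" using assms(2) by auto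
    then have "(\<Prod>y\<in>S - {x}. x - y) = (x - u) * (\<Prod>y\<in>S - {u} - {x}. x - y)"
      using assms(1) by simp
    then show "(x - u) * f x / (\<Prod>y\<in>S - {x}. x - y) = f x / (\<Prod>y\<in>S - {u} - {x}. x - y)"
      using x by simp
  qed
  finally show ?thesis ..
qed

lemma divdiff_set_rec:
  assumes "finite S" "u \<in> S" "v \<in> S" "u \<noteq> v"
  shows "divdiff_set S f = (divdiff_set (S - {u}) f - divdiff_set (S - {v}) f) / (v - u)"
proof -
  have "divdiff_set (S - {u}) f - divdiff_set (S - {v}) f
      = (\<Sum>x\<in>S. (v - u) * (f x / (\<Prod>y\<in>S - {x}. x - y)))"
    using assms
    by (simp add: divdiff_set_remove flip: sum_subtractf) (simp add: algebra_simps diff_divide_distrib)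
  also have "\<dots> = (v - u) * divdiff_set S f"
    by (simp add: divdiff_set_def sum_distrib_left)
  finally show ?thesis
    using assms(4) by simp
qed

lemma divdiff_eq_divdiff_set: "distinct xs \<Longrightarrow> xs \<noteq> [] \<Longrightarrow> divdiff xs f = divdiff_set (set xs) f"
proof (induction xs f rule: divdiff.induct)
  case (3 x y zs f)
  let ?S = "set (x # y # zs)" and ?l = "last (y # zs)"
  have l: "?l \<in> ?S" "?l \<noteq> x"
    using "3.prems" last_in_set [of "y # zs"] by auto
  have "set (butlast (x # y # zs)) = ?S - {?l}"
    using set_butlast_distinct [OF "3.prems"(1)] by simp
  moreover have "set (y # zs) = ?S - {x}"
    using "3.prems" by auto
  moreover have "divdiff (butlast (x # y # zs)) f = divdiff_set (set (butlast (x # y # zs))) f"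
    using "3.prems" by (intro "3.IH"(2)) (auto dest: in_set_butlastD intro: distinct_butlast)
  ultimately show ?case
    using "3.IH"(1) "3.prems" divdiff_set_rec [of ?S x ?l f] l by auto
qed simp_all

definition node_set :: "real set \<Rightarrow> nat \<Rightarrow> real set \<Rightarrow> bool" where
  "node_set D k T \<longleftrightarrow> finite T \<and> card T = k \<and> T \<subseteq> D"

definition n_convex_on :: "nat \<Rightarrow> real set \<Rightarrow> (real \<Rightarrow> real) \<Rightarrow> bool" where
  "n_convex_on m D f \<longleftrightarrow> (\<forall>T. node_set D (Suc (Suc m)) T \<longrightarrow> 0 \<le> divdiff_set T f)"

lemma n_convex_imp_n_convex_on:
  assumes "n_convex n I f" shows "n_convex_on n I f"
  unfolding n_convex_on_def
proof (intro allI impI)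
  fix T assume T: "node_set I (Suc (Suc n)) T"
  let ?xs = "sorted_list_of_set T"
  have xs: "length ?xs = n + 2" "distinct ?xs" "set ?xs = T"
    using T by (auto simp: node_set_def)
  then have "0 \<le> divdiff ?xs f"
    using assms T unfolding n_convex_def node_set_def by auto
  moreover from xs(1) have "?xs \<noteq> []" by (cases ?xs) simp_all
  ultimately show "0 \<le> divdiff_set T f"
    using divdiff_eq_divdiff_set [OF xs(2)] xs(3) by simp
qed

lemma divdiff_set_slope:
  assumes "finite S" "S \<noteq> {}" "c \<notin> S"
  shows "divdiff_set S (\<lambda>x. (f x - f c) / (x - c)) = divdiff_set (insert c S) f"
  using assms
proof (induction "card S" arbitrary: S rule: less_induct)
  case less
  show ?case
  proof (cases "card S = 1")
    case True
    then obtain y where "S = {y}" by (auto simp: card_Suc_eq)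
    with less.prems show ?thesis by (simp add: divdiff_set_doubleton)
  next
    case False
    obtain u where u: "u \<in> S" using less.prems by blast
    with False have "S - {u} \<noteq> {}" by (metis insert_Diff is_singletonI is_singleton_altdef)
    then obtain v where v: "v \<in> S - {u}" by blast
    with u have uv: "u \<in> S" "v \<in> S" "u \<noteq> v" by auto
    let ?g = "\<lambda>x. (f x - f c) / (x - c)"
    have IH: "divdiff_set (S - {w}) ?g = divdiff_set (insert c S - {w}) f" if "w \<in> S" for w
    proof -
      have "insert c S - {w} = insert c (S - {w})" using that less.prems by auto
      moreover have "S - {w} \<noteq> {}" using uv that by auto
      moreover have "card (S - {w}) < card S" using less.prems that by (intro card_Diff1_less)
      ultimately show ?thesis using less.hyps less.prems by simp
    qed
    have "divdiff_set S ?g = (divdiff_set (S - {u}) ?g - divdiff_set (S - {v}) ?g) / (v - u)"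
      using less.prems uv by (intro divdiff_set_rec)
    also have "\<dots> = divdiff_set (insert c S) f"
      using less.prems uv by (simp add: IH divdiff_set_rec [of "insert c S" u v])
    finally show ?thesis .
  qed
qed

lemma n_convex_on_slope:
  assumes "n_convex_on (Suc m) D f" "c \<in> D"
  shows "n_convex_on m (D - {c}) (\<lambda>x. (f x - f c) / (x - c))"
  unfolding n_convex_on_def
proof (intro allI impI)
  fix T assume T: "node_set (D - {c}) (Suc (Suc m)) T"
  then have "c \<notin> T" "T \<noteq> {}" by (auto simp: node_set_def)
  then have "node_set D (Suc (Suc (Suc m))) (insert c T)"
    using assms(2) T by (auto simp: node_set_def)
  moreover have "divdiff_set T (\<lambda>x. (f x - f c) / (x - c)) = divdiff_set (insert c T) f"
    using T \<open>c \<notin> T\<close> \<open>T \<noteq> {}\<close> by (intro divdiff_set_slope) (auto simp: node_set_def)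
  ultimately show "0 \<le> divdiff_set T (\<lambda>x. (f x - f c) / (x - c))"
    using assms(1) by (simp add: n_convex_on_def)
qed

lemma card_exchange_induct [consumes 3, case_names equal exchange]:
  assumes "finite A" "finite B" "card A = card B"
    and equal: "P B"
    and exchange: "\<And>A a b. finite A \<Longrightarrow> card A = card B \<Longrightarrow> a \<in> A - B \<Longrightarrow> b \<in> B - A
      \<Longrightarrow> P (insert b (A - {a})) \<Longrightarrow> P A"
  shows "P A"
  using assms(1,3)
proof (induction "card (A - B)" arbitrary: A rule: less_induct)
  case less
  show ?case
  proof (cases "A \<subseteq> B")
    case True
    then show ?thesis using less.prems assms(2) equal by (metis card_subset_eq)
  next
    case False
    then obtain a where a: "a \<in> A - B" by blast
    have "card (B - A) = card (A - B)"
      using less.prems assms(2) by (metis card_Diff_subset_Int finite_Int Int_commute)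
    moreover have "card (A - B) \<noteq> 0" using a less.prems by auto
    ultimately obtain b where b: "b \<in> B - A" by (metis all_not_in_conv card.empty)
    let ?A' = "insert b (A - {a})"
    have "card ((A - B) - {a}) < card (A - B)"
      using a less.prems by (intro card_Diff1_less) auto
    moreover have "?A' - B = (A - B) - {a}" using b by auto
    ultimately have smaller: "card (?A' - B) < card (A - B)" by simp
    have "card B \<noteq> 0" using b assms(2) by auto
    then have "card ?A' = card B"
      using a b less.prems by (auto simp: card_Diff_singleton)
    with smaller have "P ?A'" using less.hyps less.prems by simp
    then show ?thesis using exchange a b less.prems by blast
  qed
qed

lemma divdiff_set_mono_step:
  assumes "n_convex_on m D f" "node_set D (Suc m) (insert y W)" "node_set D (Suc m) (insert z W)"
    and "y \<notin> W" "z \<notin> W" "y < z"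
  shows "divdiff_set (insert y W) f \<le> divdiff_set (insert z W) f"
proof -
  let ?X = "insert y (insert z W)"
  have "node_set D (Suc (Suc m)) ?X"
    using assms(2-) by (auto simp: node_set_def)
  then have "0 \<le> divdiff_set ?X f" using assms(1) by (simp add: n_convex_on_def)
  moreover have "?X - {y} = insert z W" "?X - {z} = insert y W"
    using assms(4-6) by auto
  then have "divdiff_set ?X f = (divdiff_set (insert z W) f - divdiff_set (insert y W) f) / (z - y)"
    using assms(2,6) divdiff_set_rec [of ?X y z] by (auto simp: node_set_def)
  ultimately show ?thesis using assms(6) by (simp add: zero_le_divide_iff)
qed

lemma divdiff_set_mono:
  assumes f: "n_convex_on m D f" and A: "node_set D (Suc m) A" and B: "node_set D (Suc m) B"
    and "\<forall>a\<in>A - B. \<forall>b\<in>B - A. a < b"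
  shows "divdiff_set A f \<le> divdiff_set B f"
proof -
  have "finite A" "finite B" "card A = card B" using A B by (auto simp: node_set_def)
  then show ?thesis using A assms(4)
  proof (induction A rule: card_exchange_induct)
    case equal
    show ?case by simp
  next
    case (exchange A a b)
    let ?A' = "insert b (A - {a})"
    have A': "node_set D (Suc m) ?A'"
      using exchange.hyps exchange.prems B by (auto simp: node_set_def card_Diff_singleton)
    have "insert a (A - {a}) = A" using exchange.hyps by auto
    then have "divdiff_set A f \<le> divdiff_set ?A' f"
      using divdiff_set_mono_step [OF f, of a "A - {a}" b] exchange.hyps exchange.prems A' by auto
    also have "\<dots> \<le> divdiff_set B f"
    proof (rule exchange.IH [OF A'])
      show "\<forall>x\<in>?A' - B. \<forall>y\<in>B - ?A'. x < y" using exchange.prems(2) exchange.hyps by blast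
    qed
    finally show ?case .
  qed
qed

lemma node_set_mono: "node_set D k T \<Longrightarrow> D \<subseteq> D' \<Longrightarrow> node_set D' k T"
  by (auto simp: node_set_def)

lemma ex_node_set_greaterThanLessThan:
  fixes a b :: real
  assumes "a < b" obtains T where "node_set {a<..<b} k T"
  using infinite_arbitrarily_large [of "{a<..<b}" k] assms by (auto simp: node_set_def)

definition omega :: "real \<Rightarrow> real set \<Rightarrow> real" where
  "omega c T = (\<Prod>s\<in>T. c - s)"

text \<open>For \<open>c \<notin> T\<close>, the value at \<open>c\<close> of the polynomial interpolating \<open>f\<close> at the nodes \<open>T\<close>:
  it is the unique value \<open>a\<close> that makes the divided difference of \<open>f(c := a)\<close> on \<open>insert c T\<close>
  vanish.\<close>
definition interp_value :: "(real \<Rightarrow> real) \<Rightarrow> real \<Rightarrow> real set \<Rightarrow> real" where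
  "interp_value f c T = - omega c T * divdiff_set (insert c T) (f(c := 0))"

lemma omega_insert: "finite T \<Longrightarrow> z \<notin> T \<Longrightarrow> omega c (insert z T) = (c - z) * omega c T"
  by (simp add: omega_def)

lemma omega_nonzero: "finite T \<Longrightarrow> c \<notin> T \<Longrightarrow> omega c T \<noteq> 0"
  by (auto simp: omega_def prod_zero_iff)

lemma abs_omega_le:
  assumes "finite W" "W \<subseteq> {c - \<epsilon><..<c + \<epsilon>}"
  shows "\<bar>omega c W\<bar> \<le> \<epsilon> ^ card W"
proof -
  have "\<bar>omega c W\<bar> = (\<Prod>s\<in>W. \<bar>c - s\<bar>)" by (simp add: omega_def abs_prod)
  also have "\<dots> \<le> (\<Prod>s\<in>W. \<epsilon>)"
    using assms(2) by (intro prod_mono) force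
  finally show ?thesis by simp
qed

lemma divdiff_set_fun_upd:
  assumes "finite T" "c \<notin> T"
  shows "divdiff_set (insert c T) (f(c := a)) = (a - interp_value f c T) / omega c T"
proof -
  have split: "divdiff_set (insert c T) g = g c / omega c T + (\<Sum>x\<in>T. g x / (\<Prod>y\<in>insert c T - {x}. x - y))"
    for g using assms by (simp add: divdiff_set_def omega_def)
  have "(\<Sum>x\<in>T. (f(c := a)) x / (\<Prod>y\<in>insert c T - {x}. x - y))
      = (\<Sum>x\<in>T. (f(c := 0)) x / (\<Prod>y\<in>insert c T - {x}. x - y))"
    using assms(2) by (intro sum.cong) auto
  then show ?thesis
    using omega_nonzero [OF assms] by (simp add: split interp_value_def field_simps)
qed

lemma interp_value_insert:
  assumes "finite W" "c \<notin> W" "y \<notin> W" "y \<noteq> c"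
  shows "interp_value f c (insert y W)
    = omega c W * (divdiff_set (insert y W) f - divdiff_set (insert c W) (f(c := 0)))"
proof -
  let ?S = "insert c (insert y W)"
  have "?S - {c} = insert y W" "?S - {y} = insert c W"
    using assms by auto
  then have "divdiff_set ?S (f(c := 0))
      = (divdiff_set (insert y W) (f(c := 0)) - divdiff_set (insert c W) (f(c := 0))) / (y - c)"
    using assms divdiff_set_rec [of ?S c y] by simp
  moreover have "divdiff_set (insert y W) (f(c := 0)) = divdiff_set (insert y W) f"
    using assms by (intro divdiff_set_cong) auto
  ultimately have "(y - c) * divdiff_set ?S (f(c := 0))
      = divdiff_set (insert y W) f - divdiff_set (insert c W) (f(c := 0))"
    using assms(4) by simp
  moreover have "interp_value f c (insert y W) = omega c W * ((y - c) * divdiff_set ?S (f(c := 0)))"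
    using assms by (simp add: interp_value_def omega_insert algebra_simps)
  ultimately show ?thesis by simp
qed

lemma interp_value_exchange:
  assumes "finite W" "c \<notin> W" "y \<notin> W" "z \<notin> W" "y \<noteq> c" "z \<noteq> c"
  shows "interp_value f c (insert y W) - interp_value f c (insert z W)
    = omega c W * (divdiff_set (insert y W) f - divdiff_set (insert z W) f)"
  using assms by (simp add: interp_value_insert algebra_simps)

lemma interp_value_close:
  fixes \<epsilon> :: real
  assumes bounded: "\<And>T. node_set D (Suc m) T \<Longrightarrow> T \<subseteq> {c - \<epsilon><..<c + \<epsilon>}
      \<Longrightarrow> L \<le> divdiff_set T f \<and> divdiff_set T f \<le> U"
    and "c \<notin> D"
    and A: "node_set D (Suc m) A" "A \<subseteq> {c - \<epsilon><..<c + \<epsilon>}"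
    and B: "node_set D (Suc m) B" "B \<subseteq> {c - \<epsilon><..<c + \<epsilon>}"
  shows "\<bar>interp_value f c A - interp_value f c B\<bar> \<le> card (A - B) * (\<epsilon> ^ m * (U - L))"
proof -
  have "finite A" "finite B" "card A = card B" using A B by (auto simp: node_set_def)
  then show ?thesis using A
  proof (induction A rule: card_exchange_induct)
    case equal
    show ?case by simp
  next
    case (exchange A a b)
    define W where "W = A - {a}"
    let ?A' = "insert b W"
    have W: "finite W" "c \<notin> W" "a \<notin> W" "b \<notin> W" "card W = m" "A = insert a W"
      "W \<subseteq> {c - \<epsilon><..<c + \<epsilon>}"
      using exchange.hyps exchange.prems \<open>c \<notin> D\<close> by (auto simp: W_def node_set_def card_Diff_singleton)
    have "a \<noteq> c" "b \<noteq> c" using exchange.hyps exchange.prems B \<open>c \<notin> D\<close> by (auto simp: node_set_def)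
    have A': "node_set D (Suc m) ?A'" "?A' \<subseteq> {c - \<epsilon><..<c + \<epsilon>}"
      using W exchange.hyps exchange.prems B by (auto simp: node_set_def)
    have "\<bar>divdiff_set A f - divdiff_set ?A' f\<bar> \<le> U - L"
      using bounded [OF exchange.prems] bounded [OF A'] by linarith
    then have "\<bar>interp_value f c A - interp_value f c ?A'\<bar> \<le> \<epsilon> ^ m * (U - L)"
      using interp_value_exchange [OF W(1-4) \<open>a \<noteq> c\<close> \<open>b \<noteq> c\<close>, of f] abs_omega_le [OF W(1,7)]
      by (simp add: W(5,6) abs_mult mult_mono)
    moreover have "\<bar>interp_value f c ?A' - interp_value f c B\<bar> \<le> card (?A' - B) * (\<epsilon> ^ m * (U - L))"
      using exchange.IH A' by (simp add: W_def)
    moreover have "card (A - B) = Suc (card ((A - B) - {a}))"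
      using exchange.hyps by (intro card_Suc_Diff1 [symmetric]) auto
    moreover have "?A' - B = (A - B) - {a}" using exchange.hyps by (auto simp: W_def)
    ultimately show ?case by (simp add: algebra_simps)
  qed
qed

lemma ex_greaterThanLessThan_notin:
  fixes a b :: real
  assumes "a < b" "finite T"
  obtains z where "a < z" "z < b" "z \<notin> T"
proof -
  have "infinite ({a<..<b} - T)" using assms by (simp add: Diff_infinite_finite)
  then obtain z where "z \<in> {a<..<b} - T" by (metis finite.emptyI ex_in_conv)
  then show thesis using that by auto
qed

context
  fixes D :: "real set" and c :: real and f :: "real \<Rightarrow> real" and m :: nat
  assumes convex: "n_convex_on m D f" and c_notin: "c \<notin> D"
begin

lemma interp_value_move_node:
  assumes t: "node_set D (Suc m) t" and y: "y \<in> t" and z: "z \<in> D" "z \<notin> t"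
    and between: "y < z \<and> z < c \<or> c < z \<and> z < y" and sign: "0 < \<sigma> * omega c t"
  shows "node_set D (Suc m) (insert z (t - {y}))"
    and "0 < \<sigma> * omega c (insert z (t - {y}))"
    and "\<sigma> * interp_value f c t \<le> \<sigma> * interp_value f c (insert z (t - {y}))"
proof -
  define W where "W = t - {y}"
  have W: "finite W" "c \<notin> W" "y \<notin> W" "z \<notin> W" "card W = m" "t = insert y W"
    using t y z c_notin by (auto simp: W_def node_set_def card_Diff_singleton)
  have "y \<noteq> c" "z \<noteq> c" using t y z c_notin by (auto simp: node_set_def)
  have nodes_y: "node_set D (Suc m) (insert y W)" using t W(6) by simp
  have nodes_z: "node_set D (Suc m) (insert z W)" using t W z by (auto simp: node_set_def)
  then show "node_set D (Suc m) (insert z (t - {y}))" by (simp add: W_def)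
  have omega_t: "\<sigma> * omega c t = (c - y) * (\<sigma> * omega c W)"
    and omega_t': "\<sigma> * omega c (insert z W) = (c - z) * (\<sigma> * omega c W)"
    using W by (simp_all add: omega_insert algebra_simps)
  have gain: "0 < \<sigma> * omega c (insert z W)
      \<and> 0 \<le> \<sigma> * omega c W * (divdiff_set (insert z W) f - divdiff_set (insert y W) f)"
    using between
  proof
    assume yzc: "y < z \<and> z < c"
    then have "0 < \<sigma> * omega c W" using sign omega_t by (simp add: zero_less_mult_iff)
    moreover have "divdiff_set (insert y W) f \<le> divdiff_set (insert z W) f"
      using divdiff_set_mono_step [OF convex nodes_y nodes_z] W yzc by simp
    ultimately show ?thesis unfolding omega_t' using yzc by simp
  next
    assume czy: "c < z \<and> z < y"
    then have "\<sigma> * omega c W < 0" using sign omega_t by (simp add: zero_less_mult_iff)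
    moreover have "divdiff_set (insert z W) f \<le> divdiff_set (insert y W) f"
      using divdiff_set_mono_step [OF convex nodes_z nodes_y] W czy by simp
    ultimately show ?thesis unfolding omega_t' using czy by (simp add: mult_neg_neg mult_nonpos_nonpos)
  qed
  have "interp_value f c (insert z W) - interp_value f c t
      = omega c W * (divdiff_set (insert z W) f - divdiff_set (insert y W) f)"
    using interp_value_exchange [OF W(1-4) \<open>y \<noteq> c\<close> \<open>z \<noteq> c\<close>, of f] W(6)
    by (simp add: algebra_simps)
  then have "\<sigma> * interp_value f c (insert z W) - \<sigma> * interp_value f c t
      = \<sigma> * omega c W * (divdiff_set (insert z W) f - divdiff_set (insert y W) f)"
    by (metis mult.assoc right_diff_distrib)
  with gain show "0 < \<sigma> * omega c (insert z (t - {y}))"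
    and "\<sigma> * interp_value f c t \<le> \<sigma> * interp_value f c (insert z (t - {y}))"
    unfolding W_def [symmetric] by simp_all
qed

lemma exists_clustered_node_set:
  fixes \<epsilon> :: real
  assumes nbhd: "{c - \<epsilon><..<c + \<epsilon>} - {c} \<subseteq> D" and "0 < \<epsilon>"
    and "node_set D (Suc m) t" "0 < \<sigma> * omega c t"
  shows "\<exists>t'. node_set D (Suc m) t' \<and> 0 < \<sigma> * omega c t' \<and> t' \<subseteq> {c - \<epsilon><..<c + \<epsilon>}
    \<and> \<sigma> * interp_value f c t \<le> \<sigma> * interp_value f c t'"
  using assms(3,4)
proof (induction "card (t - {c - \<epsilon><..<c + \<epsilon>})" arbitrary: t rule: less_induct)
  case less
  let ?N = "{c - \<epsilon><..<c + \<epsilon>}"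
  have "finite t" "t \<subseteq> D" using less.prems by (auto simp: node_set_def)
  show ?case
  proof (cases "t \<subseteq> ?N")
    case True
    then show ?thesis using less.prems by blast
  next
    case False
    then obtain y where y: "y \<in> t" "y \<notin> ?N" by blast
    then have "y \<noteq> c" using \<open>t \<subseteq> D\<close> c_notin by auto
    obtain z where z: "z \<in> ?N - {c}" "z \<notin> t" "y < z \<and> z < c \<or> c < z \<and> z < y"
    proof (cases "y < c")
      case True
      obtain z where "c - \<epsilon> < z" "z < c" "z \<notin> t"
        using ex_greaterThanLessThan_notin [of "c - \<epsilon>" c t] \<open>0 < \<epsilon>\<close> \<open>finite t\<close> by auto
      then show thesis using that y True by force
    next
      case False
      obtain z where "c < z" "z < c + \<epsilon>" "z \<notin> t"
        using ex_greaterThanLessThan_notin [of c "c + \<epsilon>" t] \<open>0 < \<epsilon>\<close> \<open>finite t\<close> by auto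
      then show thesis using that y False by force
    qed
    let ?t1 = "insert z (t - {y})"
    have "z \<in> D" using z nbhd by blast
    note moved = interp_value_move_node [OF less.prems(1) y(1) \<open>z \<in> D\<close> z(2,3) less.prems(2)]
    have "card ((t - ?N) - {y}) < card (t - ?N)"
      using \<open>finite t\<close> y by (intro card_Diff1_less) auto
    moreover have "?t1 - ?N = (t - ?N) - {y}" using z y by auto
    ultimately have "card (?t1 - ?N) < card (t - ?N)" by simp
    then obtain t' where "node_set D (Suc m) t'" "0 < \<sigma> * omega c t'" "t' \<subseteq> ?N"
      "\<sigma> * interp_value f c ?t1 \<le> \<sigma> * interp_value f c t'"
      using less.hyps moved(1,2) by blast
    with moved(3) show ?thesis by (meson order_trans)
  qed
qed

lemma divdiff_set_bounded_near:
  assumes nbhd: "{c - r<..<c + r} - {c} \<subseteq> D" and "0 < r"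
  obtains L U where "L \<le> U"
    and "\<And>T. node_set D (Suc m) T \<Longrightarrow> T \<subseteq> {c - r/2<..<c + r/2}
      \<Longrightarrow> L \<le> divdiff_set T f \<and> divdiff_set T f \<le> U"
proof -
  obtain Ls where Ls: "node_set {c - r<..<c - r/2} (Suc m) Ls"
    using ex_node_set_greaterThanLessThan [of "c - r" "c - r/2" "Suc m"] \<open>0 < r\<close> by auto
  obtain Hs where Hs: "node_set {c + r/2<..<c + r} (Suc m) Hs"
    using ex_node_set_greaterThanLessThan [of "c + r/2" "c + r" "Suc m"] \<open>0 < r\<close> by auto
  have "{c - r<..<c - r/2} \<subseteq> D" "{c + r/2<..<c + r} \<subseteq> D" using nbhd \<open>0 < r\<close> by auto
  then have L: "node_set D (Suc m) Ls" and H: "node_set D (Suc m) Hs"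
    using node_set_mono [OF Ls] node_set_mono [OF Hs] by simp_all
  show thesis
  proof (rule that)
    show "divdiff_set Ls f \<le> divdiff_set Hs f"
      using divdiff_set_mono [OF convex L H] Ls Hs by (force simp: node_set_def)
    fix T assume T: "node_set D (Suc m) T" "T \<subseteq> {c - r/2<..<c + r/2}"
    show "divdiff_set Ls f \<le> divdiff_set T f \<and> divdiff_set T f \<le> divdiff_set Hs f"
      using divdiff_set_mono [OF convex L T(1)] divdiff_set_mono [OF convex T(1) H] Ls Hs T(2)
      by (force simp: node_set_def)
  qed
qed


lemma interp_value_le:
  assumes "0 < m" and nbhd: "{c - r<..<c + r} - {c} \<subseteq> D" and "0 < r"
    and t: "node_set D (Suc m) t" "0 < omega c t"
    and s: "node_set D (Suc m) s" "omega c s < 0"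
  shows "interp_value f c t \<le> interp_value f c s"
proof (rule field_le_epsilon)
  fix e :: real assume "0 < e"
  obtain L U where "L \<le> U" and bounded: "\<And>T. node_set D (Suc m) T \<Longrightarrow> T \<subseteq> {c - r/2<..<c + r/2}
      \<Longrightarrow> L \<le> divdiff_set T f \<and> divdiff_set T f \<le> U"
    using divdiff_set_bounded_near [OF nbhd \<open>0 < r\<close>] by blast
  define K where "K = real (Suc m) * (U - L + 1)"
  define \<epsilon> where "\<epsilon> = min (r/2) (min 1 (e / K))"
  have "0 < K" using \<open>L \<le> U\<close> by (simp add: K_def add_pos_nonneg)
  then have \<epsilon>: "0 < \<epsilon>" "\<epsilon> \<le> r/2" "\<epsilon> \<le> 1" "\<epsilon> \<le> e / K"
    using \<open>0 < r\<close> \<open>0 < e\<close> unfolding \<epsilon>_def by (simp, meson min.cobounded1 min.cobounded2 order.trans)+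
  have "{c - \<epsilon><..<c + \<epsilon>} \<subseteq> {c - r<..<c + r}" using \<epsilon>(2) \<open>0 < r\<close> by auto
  then have nbhd_\<epsilon>: "{c - \<epsilon><..<c + \<epsilon>} - {c} \<subseteq> D" using nbhd by blast
  obtain t1 where t1: "node_set D (Suc m) t1" "t1 \<subseteq> {c - \<epsilon><..<c + \<epsilon>}"
      "interp_value f c t \<le> interp_value f c t1"
    using exists_clustered_node_set [OF nbhd_\<epsilon> \<epsilon>(1), of t 1] t by auto
  obtain s1 where s1: "node_set D (Suc m) s1" "s1 \<subseteq> {c - \<epsilon><..<c + \<epsilon>}"
      "interp_value f c s1 \<le> interp_value f c s"
    using exists_clustered_node_set [OF nbhd_\<epsilon> \<epsilon>(1), of s "-1"] s by auto
  have "\<bar>interp_value f c t1 - interp_value f c s1\<bar> \<le> card (t1 - s1) * (\<epsilon> ^ m * (U - L))"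
    using bounded \<epsilon>(2) by (intro interp_value_close [OF _ c_notin t1(1,2) s1(1,2)]) force
  also have "\<dots> \<le> real (Suc m) * (\<epsilon> * (U - L + 1))"
  proof (rule mult_mono)
    have "card (t1 - s1) \<le> card t1" using t1(1) by (intro card_mono) (auto simp: node_set_def)
    then show "real (card (t1 - s1)) \<le> real (Suc m)" using t1(1) by (simp add: node_set_def)
    show "\<epsilon> ^ m * (U - L) \<le> \<epsilon> * (U - L + 1)"
      using power_decreasing [of 1 m \<epsilon>] \<open>0 < m\<close> \<epsilon> \<open>L \<le> U\<close> by (intro mult_mono) auto
  qed (use \<epsilon> \<open>L \<le> U\<close> in auto)
  also have "\<dots> = \<epsilon> * K" by (simp add: K_def)
  also have "\<dots> \<le> e" using \<epsilon>(4) \<open>0 < K\<close> by (simp add: pos_le_divide_eq)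
  finally show "interp_value f c t \<le> interp_value f c s + e"
    using t1(3) s1(3) by linarith
qed

lemma n_convex_on_fun_upd:
  assumes "0 < m" and nbhd: "{c - r<..<c + r} - {c} \<subseteq> D" and "0 < r"
  obtains a where "n_convex_on m (insert c D) (f(c := a))"
proof -
  let ?P = "{t. node_set D (Suc m) t \<and> 0 < omega c t}"
  have left: "{c - r<..<c} \<subseteq> D" using nbhd by auto
  obtain T0 where T0: "node_set {c - r<..<c} (Suc m) T0"
    using ex_node_set_greaterThanLessThan [of "c - r" c] \<open>0 < r\<close> by auto
  then have "T0 \<in> ?P"
    using left by (auto simp: node_set_def omega_def intro!: prod_pos)
  obtain W0 where W0: "node_set {c - r<..<c} m W0"
    using ex_node_set_greaterThanLessThan [of "c - r" c] \<open>0 < r\<close> by auto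
  define s0 where "s0 = insert (c + r/2) W0"
  have "c + r/2 \<notin> W0" "0 < omega c W0"
    using W0 \<open>0 < r\<close> by (auto simp: node_set_def omega_def intro!: prod_pos)
  then have s0: "node_set D (Suc m) s0" "omega c s0 < 0"
    using W0 left nbhd \<open>0 < r\<close> by (auto simp: s0_def node_set_def omega_insert mult_neg_pos)
  define a where "a = Sup (interp_value f c ` ?P)"
  have below_a: "interp_value f c t \<le> a" if "t \<in> ?P" for t
    unfolding a_def using interp_value_le [OF \<open>0 < m\<close> nbhd \<open>0 < r\<close> _ _ s0] that
    by (intro cSup_upper bdd_aboveI2) auto
  have above_a: "a \<le> interp_value f c s" if "node_set D (Suc m) s" "omega c s < 0" for s
    unfolding a_def using interp_value_le [OF \<open>0 < m\<close> nbhd \<open>0 < r\<close> _ _ that] \<open>T0 \<in> ?P\<close>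
    by (intro cSup_least) auto
  show thesis
  proof (rule that, unfold n_convex_on_def, intro allI impI)
    fix S assume S: "node_set (insert c D) (Suc (Suc m)) S"
    show "0 \<le> divdiff_set S (f(c := a))"
    proof (cases "c \<in> S")
      case True
      define t where "t = S - {c}"
      have t: "finite t" "c \<notin> t" "node_set D (Suc m) t" "S = insert c t"
        using S True by (auto simp: t_def node_set_def card_Diff_singleton)
      have "omega c t \<noteq> 0" using omega_nonzero t by blast
      then show ?thesis
        using below_a [of t] above_a [of t] t
        by (auto simp: divdiff_set_fun_upd linorder_neq_iff divide_nonpos_neg)
    next
      case False
      then have "divdiff_set S (f(c := a)) = divdiff_set S f" by (intro divdiff_set_cong) auto
      moreover have "node_set D (Suc (Suc m)) S" using S False by (auto simp: node_set_def)
      ultimately show ?thesis using convex by (simp add: n_convex_on_def)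
    qed
  qed
qed

end

lemma n_convex_on_zero_mono:
  assumes "n_convex_on 0 D f" "y \<in> D" "z \<in> D" "y < z"
  shows "f y \<le> f z"
proof -
  have "node_set D (Suc (Suc 0)) {y, z}" using assms(2-4) by (simp add: node_set_def)
  then have "0 \<le> divdiff_set {y, z} f" using assms(1) by (simp add: n_convex_on_def)
  then have "0 \<le> (f z - f y) / (z - y)" using divdiff_set_doubleton [of y z f] assms(4) by simp
  then show ?thesis using assms(4) by (simp add: zero_le_divide_iff)
qed

lemma poly_sign_from_slope:
  fixes q :: "real poly"
  assumes "c \<notin> D" "degree q \<le> m"
    and slope: "\<forall>x\<in>D. 0 \<le> (x - c) ^ Suc m * ((f x - f c) / (x - c) - poly q x)"
  obtains p where "degree p \<le> Suc m" "poly p c = f c"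
    "\<forall>x\<in>D. 0 \<le> (x - c) ^ Suc (Suc m) * (f x - poly p x)"
proof
  let ?p = "[:f c:] + [:- c, 1:] * q"
  have "degree ([:- c, 1:] * q) \<le> Suc m"
    using degree_mult_le [of "[:- c, 1:]" q] assms(2) by simp
  then show "degree ?p \<le> Suc m" by (simp add: degree_add_le)
  show "poly ?p c = f c" by simp
  show "\<forall>x\<in>D. 0 \<le> (x - c) ^ Suc (Suc m) * (f x - poly ?p x)"
  proof
    fix x assume "x \<in> D"
    then have "x \<noteq> c" using assms(1) by auto
    define E where "E = (f x - f c) / (x - c) - poly q x"
    have "f x - poly ?p x = (x - c) * E"
      using \<open>x \<noteq> c\<close> by (simp add: E_def field_simps)
    then have "(x - c) ^ Suc (Suc m) * (f x - poly ?p x) = (x - c)\<^sup>2 * ((x - c) ^ Suc m * E)"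
      by (simp only:) (simp add: power2_eq_square mult_ac)
    moreover have "0 \<le> (x - c) ^ Suc m * E"
      unfolding E_def using slope \<open>x \<in> D\<close> by blast
    ultimately show "0 \<le> (x - c) ^ Suc (Suc m) * (f x - poly ?p x)"
      by (metis zero_le_power2 mult_nonneg_nonneg)
  qed
qed

lemma n_convex_on_exists_poly_sign:
  assumes "c \<in> interior J" "n_convex_on m (J - {c}) f"
  shows "\<exists>q. degree q \<le> m \<and> (\<forall>x\<in>J - {c}. 0 \<le> (x - c) ^ Suc m * (f x - poly q x))"
proof -
  obtain r where "0 < r" "ball c r \<subseteq> J" using assms(1) by (meson mem_interior)
  then have nbhd: "{c - r<..<c + r} - {c} \<subseteq> J - {c}" and "c \<in> J"
    by (auto simp: subset_iff dist_real_def abs_less_iff)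
  show ?thesis using assms(2)
  proof (induction m arbitrary: f)
    case 0
    let ?A = "f ` {y \<in> J - {c}. y < c}"
    have "c - r/2 \<in> {c - r<..<c + r} - {c}" "c + r/2 \<in> {c - r<..<c + r} - {c}"
      using \<open>0 < r\<close> by auto
    with nbhd have "c - r/2 \<in> J - {c}" "c + r/2 \<in> J - {c}" by blast+
    then have "?A \<noteq> {}" and bdd: "bdd_above ?A"
      using n_convex_on_zero_mono [OF "0.prems"] \<open>0 < r\<close>
      by (auto intro!: bdd_aboveI2 [where M = "f (c + r/2)"])
    define a where "a = Sup ?A"
    have "0 \<le> (x - c) ^ Suc 0 * (f x - poly [:a:] x)" if x: "x \<in> J - {c}" for x
    proof (cases "x < c")
      case True
      then have "f x \<le> a" unfolding a_def using bdd x by (intro cSup_upper) auto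
      with True show ?thesis by (simp add: mult_nonpos_nonpos)
    next
      case False
      then have "c < x" using x by auto
      then have "a \<le> f x"
        unfolding a_def using \<open>?A \<noteq> {}\<close> n_convex_on_zero_mono [OF "0.prems" _ x] by (intro cSup_least) auto
      with \<open>c < x\<close> show ?thesis by simp
    qed
    then show ?case by (intro exI [of _ "[:a:]"]) simp
  next
    case (Suc m)
    obtain a where "n_convex_on (Suc m) (insert c (J - {c})) (f(c := a))"
      using n_convex_on_fun_upd [OF Suc.prems _ _ nbhd \<open>0 < r\<close>] by auto
    moreover define H where "H = f(c := a)"
    ultimately have "n_convex_on (Suc m) J H"
      using \<open>c \<in> J\<close> by (simp add: insert_absorb)
    then have "n_convex_on m (J - {c}) (\<lambda>x. (H x - H c) / (x - c))"
      using \<open>c \<in> J\<close> by (rule n_convex_on_slope)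
    then obtain q where "degree q \<le> m"
      "\<forall>x\<in>J - {c}. 0 \<le> (x - c) ^ Suc m * ((H x - H c) / (x - c) - poly q x)"
      using Suc.IH by blast
    then obtain p where "degree p \<le> Suc m" "\<forall>x\<in>J - {c}. 0 \<le> (x - c) ^ Suc (Suc m) * (H x - poly p x)"
      using poly_sign_from_slope [of c "J - {c}" q m H] by blast
    then show ?case by (auto simp: H_def)
  qed
qed

theorem corollary1:
  fixes I :: "real set" and n :: nat and f :: "real \<Rightarrow> real" and x1 :: real
  assumes "is_interval I"
    and "odd n"
    and "n_convex n I f"
    and "x1 \<in> interior I"
  shows "\<exists>p :: real poly. degree p \<le> n \<and> poly p x1 = f x1 \<and> (\<forall>x\<in>I. poly p x \<le> f x)"
proof -
  obtain k where n: "n = Suc k" and "even k" using assms(2) by (cases n) auto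
  have "x1 \<in> I" using assms(4) interior_subset by blast
  with assms(3) n have "n_convex_on k (I - {x1}) (\<lambda>x. (f x - f x1) / (x - x1))"
    by (auto intro: n_convex_on_slope n_convex_imp_n_convex_on)
  then obtain q where "degree q \<le> k"
    "\<forall>x\<in>I - {x1}. 0 \<le> (x - x1) ^ Suc k * ((f x - f x1) / (x - x1) - poly q x)"
    using n_convex_on_exists_poly_sign [OF assms(4)] by blast
  then obtain p where p: "degree p \<le> n" "poly p x1 = f x1"
    "\<forall>x\<in>I - {x1}. 0 \<le> (x - x1) ^ Suc n * (f x - poly p x)"
    using poly_sign_from_slope [of x1 "I - {x1}" q k f] n by auto
  have "poly p x \<le> f x" if "x \<in> I" for x
  proof (cases "x = x1")
    case False
    then have "0 < (x - x1) ^ Suc n" unfolding zero_less_power_eq using \<open>even k\<close> n by simp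
    moreover have "0 \<le> (x - x1) ^ Suc n * (f x - poly p x)" using p(3) that False by blast
    ultimately show ?thesis by (metis zero_le_mult_iff linorder_not_less diff_ge_0_iff_ge)
  qed (simp add: p(2))
  with p(1,2) show ?thesis by blast
qed

end
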